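(* If $G=(V,E)$ is weakly observable and $|V|\ge2$, then for any player algorithm and any time horizon $T$ there exists a sequence of loss functions $\ell_1,\dots,\ell_T:V\to[0,1]$ such that the player's expected regret in the online learning problem with feedback graph $G$ is at least $\tfrac18 T^{2/3}$.
   Context: Let $G=(V,E)$ be a directed graph (self-loops allowed), $N^{\mathrm{in}}(i)=\{j:(j,i)\in E\}$, $N^{\mathrm{out}}(i)=\{j:(i,j)\in E\}$. A vertex $i$ is observable if $N^{\mathrm{in}}(i)\ne\emptyset$; strongly observable if $i\in N^{\mathrm{in}}(i)$ or $V\setminus\{i\}\subseteq N^{\mathrm{in}}(i)$ (or both); $G$ is weakly observable if every vertex is observable but not every vertex is strongly observable. Online learning with feedback graph $G$: the environment fixes in advance losses $\ell_t:V\to[0,1]$; on round $t$ the player chooses (possibly randomly) $I_t\in V$ based on past observations, incurs $\ell_t(I_t)$, and observes only $\{(j,\ell_t(j)):j\in N^{\mathrm{out}}(I_t)\}$. Expected regret: $\mathbb{E}[\sum_{t=1}^T\ell_t(I_t)]-\min_{i\in V}\sum_{t=1}^T\ell_t(i)$. *)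

theory Defs
  imports "HOL-Probability.Probability"
begin

text \<open>A directed graph on the (finite) vertex type 'v is given by its edge set E;
  self-loops are allowed.\<close>

definition N_in :: "('v \<times> 'v) set \<Rightarrow> 'v \<Rightarrow> 'v set" where
  "N_in E i = {j. (j, i) \<in> E}"

definition N_out :: "('v \<times> 'v) set \<Rightarrow> 'v \<Rightarrow> 'v set" where
  "N_out E i = {j. (i, j) \<in> E}"

definition observable :: "('v \<times> 'v) set \<Rightarrow> 'v \<Rightarrow> bool" where
  "observable E i \<longleftrightarrow> N_in E i \<noteq> {}"

definition strongly_observable :: "('v \<times> 'v) set \<Rightarrow> 'v \<Rightarrow> bool" where
  "strongly_observable E i \<longleftrightarrow> i \<in> N_in E i \<or> UNIV - {i} \<subseteq> N_in E i"

definition weakly_observable :: "('v \<times> 'v) set \<Rightarrow> bool" where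
  "weakly_observable E \<longleftrightarrow>
     (\<forall>i. observable E i) \<and> \<not> (\<forall>i. strongly_observable E i)"

definition feedback :: "('v \<times> 'v) set \<Rightarrow> 'v \<Rightarrow> ('v \<Rightarrow> real) \<Rightarrow> ('v \<Rightarrow> real option)" where
  "feedback E i l = (\<lambda>j. if j \<in> N_out E i then Some (l j) else None)"

type_synonym 'v history = "('v \<times> ('v \<Rightarrow> real option)) list"

type_synonym 'v player = "'v history \<Rightarrow> 'v pmf"

text \<open>Distribution of the history after t rounds, against the loss sequence l
  (round s, for s = 1,2,..., uses loss function l s).\<close>
fun hist_pmf :: "('v \<times> 'v) set \<Rightarrow> 'v player \<Rightarrow> (nat \<Rightarrow> 'v \<Rightarrow> real) \<Rightarrow> nat \<Rightarrow> 'v history pmf" where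
  "hist_pmf E P l 0 = return_pmf []"
| "hist_pmf E P l (Suc t) =
     bind_pmf (hist_pmf E P l t)
       (\<lambda>h. map_pmf (\<lambda>i. h @ [(i, feedback E i (l (Suc t)))]) (P h))"

text \<open>Cumulative loss incurred along a history (k-th entry is round k+1).\<close>
definition cum_loss :: "(nat \<Rightarrow> 'v \<Rightarrow> real) \<Rightarrow> 'v history \<Rightarrow> real" where
  "cum_loss l h = (\<Sum>k<length h. l (Suc k) (fst (h ! k)))"

definition expected_regret ::
  "('v::finite \<times> 'v) set \<Rightarrow> 'v player \<Rightarrow> (nat \<Rightarrow> 'v \<Rightarrow> real) \<Rightarrow> nat \<Rightarrow> real" where
  "expected_regret E P l T =
     measure_pmf.expectation (hist_pmf E P l T) (cum_loss l)
     - (MIN i. \<Sum>t=1..T. l t i)"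

end

theory Submission
  imports Defs
begin

text \<open>If \<open>G\<close> is weakly observable, some vertex \<open>a\<close> is observed neither from itself nor from
  some other vertex \<open>b\<close>. Give \<open>a\<close> a fresh Bernoulli loss of mean \<open>1/2 \<mp> \<epsilon>\<close> in each round, \<open>b\<close> the
  loss \<open>1/2\<close> and every other vertex the loss \<open>1\<close>. Telling the two environments apart requires
  plays of vertices that observe \<open>a\<close>, each costing at least \<open>1/2\<close> in regret; without them the
  player cannot tell whether \<open>a\<close> or \<open>b\<close> is optimal and loses \<open>\<epsilon>\<close> per round in one of the
  two environments. The information gained is controlled through the Bhattacharyya coefficient of
  the two history distributions, which each revealing play lowers by at most \<open>2\<epsilon>\<^sup>2\<close>; balancing
  the two costs with \<open>\<epsilon> = 1 / (2 T\<^sup>1\<^sup>/\<^sup>3)\<close> yields regret at least \<open>3/16 T\<^sup>2\<^sup>/\<^sup>3\<close> in one of the two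
  environments on average over its random losses, hence for one fixed loss sequence.\<close>

section \<open>Expectations under finitely supported distributions\<close>

lemma expectation_pmf_eq_sum:
  assumes "finite S" "set_pmf p \<subseteq> S"
  shows "measure_pmf.expectation p f = (\<Sum>x\<in>S. pmf p x * f x)"
  using assms by (subst integral_measure_pmf_real[where A=S]) (auto simp: mult.commute)

lemma pmf_bind_eq_sum:
  assumes "finite S" "set_pmf p \<subseteq> S"
  shows "pmf (bind_pmf p K) y = (\<Sum>x\<in>S. pmf p x * pmf (K x) y)"
  using assms by (simp add: pmf_bind expectation_pmf_eq_sum)

lemma expectation_bind_pmf_finite:
  fixes f :: "'b \<Rightarrow> real"
  assumes fin: "finite (set_pmf p)" "\<And>x. x \<in> set_pmf p \<Longrightarrow> finite (set_pmf (K x))"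
  shows "measure_pmf.expectation (bind_pmf p K) f
       = measure_pmf.expectation p (\<lambda>x. measure_pmf.expectation (K x) f)"
proof -
  define S where "S = set_pmf (bind_pmf p K)"
  have S: "finite S" using fin by (simp add: S_def)
  have supp: "set_pmf (K x) \<subseteq> S" if "x \<in> set_pmf p" for x using that by (auto simp: S_def)
  have "measure_pmf.expectation (bind_pmf p K) f = (\<Sum>y\<in>S. pmf (bind_pmf p K) y * f y)"
    using S by (rule expectation_pmf_eq_sum) (simp add: S_def)
  also have "\<dots> = (\<Sum>x\<in>set_pmf p. pmf p x * (\<Sum>y\<in>S. pmf (K x) y * f y))"
    by (simp add: pmf_bind_eq_sum[OF fin(1)] sum_distrib_left sum_distrib_right mult.assoc
        sum.swap[where A = S])
  also have "\<dots> = measure_pmf.expectation p (\<lambda>x. measure_pmf.expectation (K x) f)"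
    using fin by (simp add: expectation_pmf_eq_sum[OF S supp] expectation_pmf_eq_sum)
  finally show ?thesis .
qed

lemma expectation_cong_pmf:
  fixes f g :: "'a \<Rightarrow> real"
  assumes "\<And>x. x \<in> set_pmf p \<Longrightarrow> f x = g x"
  shows "measure_pmf.expectation p f = measure_pmf.expectation p g"
  using assms by (intro integral_cong_AE AE_pmfI) auto

lemma exists_ge_expectation_pmf:
  fixes f :: "'a \<Rightarrow> real"
  assumes "finite (set_pmf p)"
  shows "\<exists>x\<in>set_pmf p. measure_pmf.expectation p f \<le> f x"
proof (rule ccontr)
  assume "\<not> ?thesis"
  hence lt: "f x < measure_pmf.expectation p f" if "x \<in> set_pmf p" for x using that by auto
  have "measure_pmf.expectation p f = (\<Sum>x\<in>set_pmf p. pmf p x * f x)"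
    using assms by (rule expectation_pmf_eq_sum) simp
  also have "\<dots> < (\<Sum>x\<in>set_pmf p. pmf p x * measure_pmf.expectation p f)"
    using assms lt set_pmf_not_empty
    by (intro sum_strict_mono) (auto simp: set_pmf_iff intro!: mult_strict_left_mono pmf_pos)
  also have "\<dots> = measure_pmf.expectation p f"
    using sum_pmf_eq_1[OF assms] by (simp add: sum_distrib_right[symmetric])
  finally show False by simp
qed

section \<open>The Bhattacharyya coefficient\<close>

text \<open>Unlike total variation, the coefficient is supermultiplicative under sequential
  composition (\<open>bhattacharyya_bind_ge\<close>), so it can be tracked round by round.\<close>
definition bhattacharyya :: "'a set \<Rightarrow> 'a pmf \<Rightarrow> 'a pmf \<Rightarrow> real" where
  "bhattacharyya S p q = (\<Sum>x\<in>S. sqrt (pmf p x * pmf q x))"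

lemma bhattacharyya_support_cong:
  assumes "finite S" "finite S'" "set_pmf p \<subseteq> S" "set_pmf p \<subseteq> S'"
  shows "bhattacharyya S p q = bhattacharyya S' p q"
proof -
  have "bhattacharyya S p q = bhattacharyya (S \<inter> S') p q" unfolding bhattacharyya_def
    using assms by (intro sum.mono_neutral_right) (auto simp: set_pmf_iff)
  also have "\<dots> = bhattacharyya S' p q" unfolding bhattacharyya_def
    using assms by (intro sum.mono_neutral_left) (auto simp: set_pmf_iff)
  finally show ?thesis .
qed

lemma bhattacharyya_return_self:
  "finite S \<Longrightarrow> x \<in> S \<Longrightarrow> bhattacharyya S (return_pmf x) (return_pmf x) = 1"
  unfolding bhattacharyya_def by (simp add: indicator_def)

lemma sum_sqrt_mult_le:
  fixes u v :: "'a \<Rightarrow> real"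
  assumes "\<And>x. x \<in> A \<Longrightarrow> 0 \<le> u x" "\<And>x. x \<in> A \<Longrightarrow> 0 \<le> v x"
  shows "(\<Sum>x\<in>A. sqrt (u x * v x)) \<le> sqrt ((\<Sum>x\<in>A. u x) * (\<Sum>x\<in>A. v x))"
proof -
  have "(\<Sum>x\<in>A. sqrt (u x) * sqrt (v x))\<^sup>2 \<le> (\<Sum>x\<in>A. (sqrt (u x))\<^sup>2) * (\<Sum>x\<in>A. (sqrt (v x))\<^sup>2)"
    by (rule Cauchy_Schwarz_ineq_sum)
  with assms have "(\<Sum>x\<in>A. sqrt (u x) * sqrt (v x)) \<le> sqrt ((\<Sum>x\<in>A. u x) * (\<Sum>x\<in>A. v x))"
    by (simp add: real_le_rsqrt)
  then show ?thesis by (simp add: real_sqrt_mult)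
qed

lemma bhattacharyya_le_1:
  assumes "finite S"
  shows "bhattacharyya S p q \<le> 1"
proof -
  have "bhattacharyya S p q \<le> sqrt ((\<Sum>x\<in>S. pmf p x) * (\<Sum>x\<in>S. pmf q x))"
    unfolding bhattacharyya_def by (rule sum_sqrt_mult_le) auto
  also have "\<dots> \<le> 1"
    using measure_pmf.prob_le_1[of p S] measure_pmf.prob_le_1[of q S] assms
    by (simp add: measure_measure_pmf_finite mult_le_one sum_nonneg)
  finally show ?thesis .
qed

lemma bhattacharyya_bind_ge:
  assumes A: "finite A" "set_pmf p \<subseteq> A" "set_pmf q \<subseteq> A"
    and B: "finite B" "\<And>x. x \<in> A \<Longrightarrow> set_pmf (K x) \<subseteq> B \<and> set_pmf (L x) \<subseteq> B"
  shows "(\<Sum>x\<in>A. sqrt (pmf p x * pmf q x) * bhattacharyya B (K x) (L x))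
           \<le> bhattacharyya B (bind_pmf p K) (bind_pmf q L)"
proof -
  have "(\<Sum>x\<in>A. sqrt (pmf p x * pmf q x) * bhattacharyya B (K x) (L x))
      = (\<Sum>y\<in>B. \<Sum>x\<in>A. sqrt ((pmf p x * pmf (K x) y) * (pmf q x * pmf (L x) y)))"
    unfolding bhattacharyya_def
    by (subst sum.swap) (simp add: sum_distrib_left real_sqrt_mult[symmetric] ac_simps)
  also have "\<dots> \<le> (\<Sum>y\<in>B. sqrt ((\<Sum>x\<in>A. pmf p x * pmf (K x) y) * (\<Sum>x\<in>A. pmf q x * pmf (L x) y)))"
    by (intro sum_mono sum_sqrt_mult_le) auto
  also have "\<dots> = bhattacharyya B (bind_pmf p K) (bind_pmf q L)"
    unfolding bhattacharyya_def using A by (simp add: pmf_bind_eq_sum)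
  finally show ?thesis .
qed

lemma bhattacharyya_map_ge:
  assumes "finite A" "set_pmf p \<subseteq> A" "set_pmf q \<subseteq> A" "finite B" "g ` A \<subseteq> B"
  shows "bhattacharyya A p q \<le> bhattacharyya B (map_pmf g p) (map_pmf g q)"
proof -
  have "(\<Sum>x\<in>A. sqrt (pmf p x * pmf q x) * bhattacharyya B (return_pmf (g x)) (return_pmf (g x)))
      \<le> bhattacharyya B (map_pmf g p) (map_pmf g q)"
    unfolding map_pmf_def using assms by (intro bhattacharyya_bind_ge) auto
  also have "(\<Sum>x\<in>A. sqrt (pmf p x * pmf q x) * bhattacharyya B (return_pmf (g x)) (return_pmf (g x)))
      = bhattacharyya A p q"
    unfolding bhattacharyya_def[of A] using assms
    by (intro sum.cong) (auto simp: bhattacharyya_return_self)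
  finally show ?thesis .
qed

lemma abs_expectation_diff_le_sum_abs_pmf_diff:
  fixes f :: "'a \<Rightarrow> real"
  assumes S: "finite S" "set_pmf p \<subseteq> S" "set_pmf q \<subseteq> S"
    and f: "\<And>x. 0 \<le> f x \<and> f x \<le> 1"
  shows "\<bar>measure_pmf.expectation p f - measure_pmf.expectation q f\<bar>
           \<le> (\<Sum>x\<in>S. \<bar>pmf p x - pmf q x\<bar>) / 2"
proof -
  have "(\<Sum>x\<in>S. pmf p x - pmf q x) = 0"
    using sum_pmf_eq_1[OF S(1,2)] sum_pmf_eq_1[OF S(1,3)] by (simp add: sum_subtractf)
  \<comment> \<open>centring \<open>f\<close> at \<open>1/2\<close> costs nothing because \<open>p\<close> and \<open>q\<close> have the same mass\<close>
  then have "(\<Sum>x\<in>S. (pmf p x - pmf q x) * (f x - 1/2)) = (\<Sum>x\<in>S. pmf p x * f x - pmf q x * f x)"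
    by (simp add: algebra_simps sum_subtractf sum.distrib sum_divide_distrib[symmetric])
  then have "measure_pmf.expectation p f - measure_pmf.expectation q f
      = (\<Sum>x\<in>S. (pmf p x - pmf q x) * (f x - 1/2))"
    using S by (simp add: expectation_pmf_eq_sum sum_subtractf)
  also have "\<bar>\<dots>\<bar> \<le> (\<Sum>x\<in>S. \<bar>pmf p x - pmf q x\<bar> * (1/2))"
  proof (rule order_trans[OF sum_abs sum_mono])
    fix x
    have "\<bar>f x - 1/2\<bar> \<le> 1/2" using f[of x] unfolding abs_le_iff by linarith
    from mult_left_mono[OF this abs_ge_zero]
    show "\<bar>(pmf p x - pmf q x) * (f x - 1/2)\<bar> \<le> \<bar>pmf p x - pmf q x\<bar> * (1/2)"
      by (simp add: abs_mult)
  qed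
  finally show ?thesis by (simp add: sum_divide_distrib)
qed

lemma sum_abs_pmf_diff_le_bhattacharyya:
  assumes S: "finite S" "set_pmf p \<subseteq> S" "set_pmf q \<subseteq> S"
  shows "(\<Sum>x\<in>S. \<bar>pmf p x - pmf q x\<bar>) \<le> 2 * sqrt (2 - 2 * bhattacharyya S p q)"
proof -
  define u where "u x = sqrt (pmf p x)" for x
  define v where "v x = sqrt (pmf q x)" for x
  have uv: "(u x)\<^sup>2 = pmf p x" "(v x)\<^sup>2 = pmf q x" "0 \<le> u x + v x" for x
    by (auto simp: u_def v_def)
  have mass: "(\<Sum>x\<in>S. pmf p x) = 1" "(\<Sum>x\<in>S. pmf q x) = 1" using S sum_pmf_eq_1 by auto
  have bc: "bhattacharyya S p q = (\<Sum>x\<in>S. u x * v x)"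
    unfolding bhattacharyya_def u_def v_def by (simp add: real_sqrt_mult)
  have minus: "(\<Sum>x\<in>S. (u x - v x)\<^sup>2) = 2 - 2 * bhattacharyya S p q"
    using mass by (simp add: bc power2_diff uv sum.distrib sum_subtractf sum_distrib_left mult.assoc)
  have plus: "(\<Sum>x\<in>S. (u x + v x)\<^sup>2) = 2 + 2 * bhattacharyya S p q"
    using mass by (simp add: bc power2_sum uv sum.distrib sum_distrib_left mult.assoc)
  have "(\<Sum>x\<in>S. \<bar>pmf p x - pmf q x\<bar>) = (\<Sum>x\<in>S. \<bar>u x - v x\<bar> * (u x + v x))"
  proof (rule sum.cong[OF refl])
    fix x
    have "pmf p x - pmf q x = (u x - v x) * (u x + v x)"
      by (simp add: uv(1,2)[symmetric] power2_eq_square algebra_simps)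
    then show "\<bar>pmf p x - pmf q x\<bar> = \<bar>u x - v x\<bar> * (u x + v x)"
      by (simp add: abs_mult abs_of_nonneg[OF uv(3)])
  qed
  also have "\<dots> \<le> sqrt ((\<Sum>x\<in>S. (u x - v x)\<^sup>2) * (\<Sum>x\<in>S. (u x + v x)\<^sup>2))"
    using Cauchy_Schwarz_ineq_sum[of "\<lambda>x. \<bar>u x - v x\<bar>" "\<lambda>x. u x + v x" S]
    by (simp add: real_le_rsqrt)
  also have "\<dots> \<le> sqrt ((2 - 2 * bhattacharyya S p q) * 4)"
  proof -
    have "0 \<le> 2 - 2 * bhattacharyya S p q" unfolding minus[symmetric] by (simp add: sum_nonneg)
    moreover have "2 + 2 * bhattacharyya S p q \<le> 4" using bhattacharyya_le_1[OF S(1)] by simp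
    ultimately show ?thesis unfolding minus plus by (intro real_sqrt_le_mono mult_left_mono)
  qed
  also have "\<dots> = 2 * sqrt (2 - 2 * bhattacharyya S p q)"
    by (simp only: real_sqrt_mult) (use real_sqrt_abs[of 2] in simp)
  finally show ?thesis .
qed

lemma abs_expectation_diff_le_bhattacharyya:
  fixes f :: "'a \<Rightarrow> real"
  assumes "finite S" "set_pmf p \<subseteq> S" "set_pmf q \<subseteq> S" "\<And>x. 0 \<le> f x \<and> f x \<le> 1"
  shows "\<bar>measure_pmf.expectation p f - measure_pmf.expectation q f\<bar>
           \<le> sqrt (2 - 2 * bhattacharyya S p q)"
proof -
  have "\<bar>measure_pmf.expectation p f - measure_pmf.expectation q f\<bar>
      \<le> (\<Sum>x\<in>S. \<bar>pmf p x - pmf q x\<bar>) / 2"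
    using assms by (rule abs_expectation_diff_le_sum_abs_pmf_diff)
  with sum_abs_pmf_diff_le_bhattacharyya[OF assms(1-3)] show ?thesis by linarith
qed

lemma sum_sqrt_pmf_mult_le_mean_expectation:
  fixes g :: "'a \<Rightarrow> real"
  assumes "finite A" "set_pmf p \<subseteq> A" "set_pmf q \<subseteq> A" "\<And>x. 0 \<le> g x"
  shows "(\<Sum>x\<in>A. sqrt (pmf p x * pmf q x) * g x)
           \<le> (measure_pmf.expectation p g + measure_pmf.expectation q g) / 2"
proof -
  have "(\<Sum>x\<in>A. sqrt (pmf p x * pmf q x) * g x) \<le> (\<Sum>x\<in>A. (pmf p x + pmf q x) / 2 * g x)"
    using assms by (intro sum_mono mult_right_mono arith_geo_mean_sqrt) auto
  also have "\<dots> = ((\<Sum>x\<in>A. pmf p x * g x) + (\<Sum>x\<in>A. pmf q x * g x)) / 2"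
    by (simp add: sum.distrib[symmetric] sum_divide_distrib[symmetric] algebra_simps)
  also have "\<dots> = (measure_pmf.expectation p g + measure_pmf.expectation q g) / 2"
    using assms by (simp add: expectation_pmf_eq_sum)
  finally show ?thesis .
qed

lemma bhattacharyya_bernoulli_ge:
  fixes e :: real
  assumes "0 \<le> e" "e \<le> 1/2"
  shows "1 - 4 * e\<^sup>2 \<le> bhattacharyya UNIV (bernoulli_pmf (1/2 - e)) (bernoulli_pmf (1/2 + e))"
proof -
  define z where "z = 1 - 4 * e\<^sup>2"
  have z: "0 \<le> z" "z \<le> 1"
    using assms power_mono[of e "1/2" 2] by (auto simp: z_def power_divide)
  have "bhattacharyya UNIV (bernoulli_pmf (1/2 - e)) (bernoulli_pmf (1/2 + e))
      = 2 * sqrt ((1/2 - e) * (1/2 + e))"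
    using assms by (simp add: bhattacharyya_def UNIV_bool algebra_simps)
  also have "\<dots> = sqrt (2\<^sup>2 * ((1/2 - e) * (1/2 + e)))"
    by (simp only: real_sqrt_mult real_sqrt_abs)
  also have "\<dots> = sqrt z"
    by (rule arg_cong[where f = sqrt]) (simp add: z_def algebra_simps power2_eq_square)
  finally have bc: "bhattacharyya UNIV (bernoulli_pmf (1/2 - e)) (bernoulli_pmf (1/2 + e)) = sqrt z" .
  have "z = sqrt (z\<^sup>2)" using z by simp
  also have "\<dots> \<le> sqrt z" using z by (intro real_sqrt_le_mono) (simp add: power2_eq_square mult_left_le)
  finally show ?thesis by (simp add: bc z_def)
qed

section \<open>The arithmetic of the bound\<close>

lemma gap_tradeoff:
  fixes e T S D :: real
  assumes "0 \<le> e" "0 \<le> S" "\<bar>D\<bar> \<le> T * (2 * e * sqrt S)"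
  shows "e * D \<le> S / 2 + 2 * e ^ 4 * T\<^sup>2"
proof -
  define r where "r = sqrt S"
  have S: "S = r\<^sup>2" using assms(2) by (simp add: r_def)
  have "e * D \<le> e * \<bar>D\<bar>" using assms(1) by (simp add: mult_left_mono)
  also have "\<dots> \<le> e * (T * (2 * e * r))" using assms(1,3) by (simp add: r_def mult_left_mono)
  also have "\<dots> \<le> r\<^sup>2 / 2 + 2 * e ^ 4 * T\<^sup>2"
    using zero_le_power2[of "r - 2 * e\<^sup>2 * T"]
    by (simp add: power2_diff field_simps power4_eq_xxxx power2_eq_square)
  finally show ?thesis by (simp add: S)
qed

lemma cube_root_gap:
  fixes T :: nat
  defines "e \<equiv> 1 / (2 * real T powr (1/3))"
  shows "0 \<le> e" "e \<le> 1/2" "e * T - 2 * e ^ 4 * (real T)\<^sup>2 = 3/8 * real T powr (2/3)"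
proof -
  show "0 \<le> e" by (simp add: e_def)
  show "e \<le> 1/2"
  proof (cases "T = 0")
    case False
    then have "1 \<le> real T powr (1/3)" by (intro ge_one_powr_ge_zero) auto
    then show ?thesis by (simp add: e_def divide_le_eq)
  qed (simp add: e_def)
  show "e * T - 2 * e ^ 4 * (real T)\<^sup>2 = 3/8 * real T powr (2/3)"
  proof (cases "T = 0")
    case False
    define w where "w = real T powr (1/3)"
    have w: "0 < w" using False by (simp add: w_def)
    have "w ^ 3 = real T" "w\<^sup>2 = real T powr (2/3)"
      using w by (simp_all add: w_def powr_realpow[symmetric] powr_powr)
    with w show ?thesis
      by (simp add: e_def flip: w_def) (simp add: field_simps power2_eq_square power3_eq_cube power4_eq_xxxx)
  qed (simp add: e_def)
qed

section \<open>The feedback protocol\<close>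

lemma hist_pmf_cong:
  assumes "\<And>s. 1 \<le> s \<Longrightarrow> s \<le> t \<Longrightarrow> l s = l' s"
  shows "hist_pmf E P l t = hist_pmf E P l' t"
  using assms by (induction t) auto

lemma length_hist_pmf: "h \<in> set_pmf (hist_pmf E P l t) \<Longrightarrow> length h = t"
  by (induction t arbitrary: h) auto

lemma finite_set_hist_pmf:
  fixes P :: "'v::finite player"
  shows "finite (set_pmf (hist_pmf E P l t))"
  by (induction t) auto

lemma bind_map_pmf_commute:
  "bind_pmf p (\<lambda>x. map_pmf (\<lambda>y. f y x) q) = bind_pmf q (\<lambda>y. map_pmf (\<lambda>x. f y x) p)"
  unfolding map_pmf_def by (rule bind_commute_pmf)

section \<open>A hard instance for weakly observable graphs\<close>

locale hard_instance =
  fixes E :: "('v::finite \<times> 'v) set" and P :: "'v player" and a b :: 'v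
  assumes a_ne_b: "a \<noteq> b" and a_a_unobserved: "(a, a) \<notin> E" and b_a_unobserved: "(b, a) \<notin> E"
begin

definition loss :: "bool \<Rightarrow> 'v \<Rightarrow> real" where
  "loss y v = (if v = a then of_bool y else if v = b then 1/2 else 1)"

definition loss_seq :: "(nat \<Rightarrow> bool) \<Rightarrow> nat \<Rightarrow> 'v \<Rightarrow> real" where
  "loss_seq x t = loss (x t)"

definition mean_loss :: "real \<Rightarrow> 'v \<Rightarrow> real" where
  "mean_loss q v = (if v = a then q else if v = b then 1/2 else 1)"

primrec coins :: "real \<Rightarrow> nat \<Rightarrow> (nat \<Rightarrow> bool) pmf" where
  "coins q 0 = return_pmf (\<lambda>_. False)"
| "coins q (Suc t) = bind_pmf (coins q t) (\<lambda>x. map_pmf (\<lambda>y. x(Suc t := y)) (bernoulli_pmf q))"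

definition coins_hist :: "real \<Rightarrow> nat \<Rightarrow> ((nat \<Rightarrow> bool) \<times> 'v history) pmf" where
  "coins_hist q t = bind_pmf (coins q t) (\<lambda>x. map_pmf (Pair x) (hist_pmf E P (loss_seq x) t))"

definition extend :: "'v history \<Rightarrow> 'v \<Rightarrow> bool \<Rightarrow> 'v history" where
  "extend h i y = h @ [(i, feedback E i (loss y))]"

definition next_hist :: "real \<Rightarrow> 'v history \<Rightarrow> 'v history pmf" where
  "next_hist q h = bind_pmf (P h) (\<lambda>i. map_pmf (extend h i) (bernoulli_pmf q))"

primrec hist :: "real \<Rightarrow> nat \<Rightarrow> 'v history pmf" where
  "hist q 0 = return_pmf []"
| "hist q (Suc t) = bind_pmf (hist q t) (next_hist q)"

lemma coins_hist_Suc: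
  "coins_hist q (Suc t) = bind_pmf (coins_hist q t) (\<lambda>(x, h). bind_pmf (P h)
      (\<lambda>i. map_pmf (\<lambda>y. (x(Suc t := y), extend h i y)) (bernoulli_pmf q)))"
proof -
  have past: "hist_pmf E P (loss_seq (x(Suc t := y))) t = hist_pmf E P (loss_seq x) t" for x y
    by (rule hist_pmf_cong) (auto simp: loss_seq_def)
  have "coins_hist q (Suc t) = bind_pmf (coins q t) (\<lambda>x. bind_pmf (bernoulli_pmf q) (\<lambda>y.
      bind_pmf (hist_pmf E P (loss_seq x) t) (\<lambda>h. map_pmf (\<lambda>i. (x(Suc t := y), extend h i y)) (P h))))"
    unfolding coins_hist_def
    by (simp add: bind_assoc_pmf bind_map_pmf map_bind_pmf map_pmf_comp past extend_def loss_seq_def)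
  also have "\<dots> = bind_pmf (coins q t) (\<lambda>x. bind_pmf (hist_pmf E P (loss_seq x) t) (\<lambda>h.
      bind_pmf (P h) (\<lambda>i. map_pmf (\<lambda>y. (x(Suc t := y), extend h i y)) (bernoulli_pmf q))))"
    by (subst bind_commute_pmf, subst bind_map_pmf_commute) (rule refl)
  also have "\<dots> = bind_pmf (coins_hist q t) (\<lambda>(x, h). bind_pmf (P h)
      (\<lambda>i. map_pmf (\<lambda>y. (x(Suc t := y), extend h i y)) (bernoulli_pmf q)))"
    unfolding coins_hist_def by (simp add: bind_assoc_pmf bind_map_pmf)
  finally show ?thesis .
qed

lemma map_snd_coins_hist: "map_pmf snd (coins_hist q t) = hist q t"
proof (induction t)
  case 0
  show ?case by (simp add: coins_hist_def bind_return_pmf)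
next
  case (Suc t)
  have "map_pmf snd (coins_hist q (Suc t)) = bind_pmf (coins_hist q t) (\<lambda>p. next_hist q (snd p))"
    by (simp add: coins_hist_Suc map_bind_pmf map_pmf_comp next_hist_def case_prod_beta)
  also have "\<dots> = bind_pmf (map_pmf snd (coins_hist q t)) (next_hist q)"
    by (simp add: bind_map_pmf)
  finally show ?case using Suc by simp
qed

lemma finite_set_coins: "finite (set_pmf (coins q t))"
  by (induction t) auto

lemma finite_set_coins_hist: "finite (set_pmf (coins_hist q t))"
  unfolding coins_hist_def using finite_set_coins finite_set_hist_pmf by (auto intro!: finite_imageI)

lemma finite_set_hist: "finite (set_pmf (hist q t))"
  using finite_set_coins_hist[of q t] by (simp flip: map_snd_coins_hist)

lemma length_coins_hist: "p \<in> set_pmf (coins_hist q t) \<Longrightarrow> length (snd p) = t"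
  unfolding coins_hist_def by (auto simp: length_hist_pmf)

lemma cum_loss_extend:
  "length h = t \<Longrightarrow> cum_loss (loss_seq (x(Suc t := y))) (extend h i y) = cum_loss (loss_seq x) h + loss y i"
  by (simp add: cum_loss_def extend_def loss_seq_def nth_append)

lemma expectation_loss:
  "0 \<le> q \<Longrightarrow> q \<le> 1 \<Longrightarrow> measure_pmf.expectation (bernoulli_pmf q) (\<lambda>y. c + loss y v) = c + mean_loss q v"
  by (simp add: loss_def mean_loss_def algebra_simps)

definition mean_round_loss :: "real \<Rightarrow> 'v history \<Rightarrow> real" where
  "mean_round_loss q h = measure_pmf.expectation (P h) (mean_loss q)"

definition expected_cum_loss :: "real \<Rightarrow> nat \<Rightarrow> real" where
  "expected_cum_loss q t = measure_pmf.expectation (coins_hist q t) (\<lambda>(x, h). cum_loss (loss_seq x) h)"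

lemma expected_cum_loss_Suc:
  assumes "0 \<le> q" "q \<le> 1"
  shows "expected_cum_loss q (Suc t)
           = expected_cum_loss q t + measure_pmf.expectation (hist q t) (mean_round_loss q)"
proof -
  let ?C = "\<lambda>p. cum_loss (loss_seq (fst p)) (snd p)"
  have "expected_cum_loss q (Suc t) = measure_pmf.expectation (coins_hist q t) (\<lambda>p.
      measure_pmf.expectation (P (snd p)) (\<lambda>i. measure_pmf.expectation (bernoulli_pmf q)
        (\<lambda>y. cum_loss (loss_seq ((fst p)(Suc t := y))) (extend (snd p) i y))))"
    unfolding expected_cum_loss_def coins_hist_Suc
    by (simp add: case_prod_beta expectation_bind_pmf_finite finite_set_coins_hist)
  also have "\<dots> = measure_pmf.expectation (coins_hist q t) (\<lambda>p. ?C p + mean_round_loss q (snd p))"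
  proof (rule expectation_cong_pmf)
    fix p
    assume "p \<in> set_pmf (coins_hist q t)"
    then have "length (snd p) = t" by (rule length_coins_hist)
    then have "measure_pmf.expectation (P (snd p)) (\<lambda>i. measure_pmf.expectation (bernoulli_pmf q)
        (\<lambda>y. cum_loss (loss_seq ((fst p)(Suc t := y))) (extend (snd p) i y)))
      = measure_pmf.expectation (P (snd p)) (\<lambda>i. ?C p + mean_loss q i)"
      using assms by (simp only: cum_loss_extend expectation_loss)
    then show "measure_pmf.expectation (P (snd p)) (\<lambda>i. measure_pmf.expectation (bernoulli_pmf q)
        (\<lambda>y. cum_loss (loss_seq ((fst p)(Suc t := y))) (extend (snd p) i y)))
      = ?C p + mean_round_loss q (snd p)"
      by (simp add: mean_round_loss_def integral_add integrable_measure_pmf_finite)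
  qed
  also have "\<dots> = expected_cum_loss q t + measure_pmf.expectation (hist q t) (mean_round_loss q)"
    unfolding expected_cum_loss_def
    by (simp add: integral_add integrable_measure_pmf_finite finite_set_coins_hist split_def
        flip: map_snd_coins_hist)
  finally show ?thesis .
qed

lemma expected_cum_loss_eq_sum:
  "0 \<le> q \<Longrightarrow> q \<le> 1 \<Longrightarrow>
     expected_cum_loss q T = (\<Sum>s<T. measure_pmf.expectation (hist q s) (mean_round_loss q))"
  by (induction T)
    (simp_all add: expected_cum_loss_Suc, simp add: expected_cum_loss_def coins_hist_def cum_loss_def
      bind_return_pmf)

lemma expectation_coins_loss:
  assumes q: "0 \<le> q" "q \<le> 1" and s: "1 \<le> s" "s \<le> t"
  shows "measure_pmf.expectation (coins q t) (\<lambda>x. loss_seq x s v) = mean_loss q v"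
  using s
proof (induction t)
  case (Suc t)
  show ?case
  proof (cases "s = Suc t")
    case True
    with q show ?thesis
      by (simp add: expectation_bind_pmf_finite finite_set_coins loss_seq_def loss_def mean_loss_def
          field_simps)
  next
    case False
    with Suc show ?thesis by (simp add: expectation_bind_pmf_finite finite_set_coins loss_seq_def)
  qed
qed simp

lemma exists_coins_regret_ge:
  assumes "0 \<le> q" "q \<le> 1"
  shows "\<exists>x. expected_cum_loss q T - real T * mean_loss q v \<le> expected_regret E P (loss_seq x) T"
proof -
  let ?R = "\<lambda>x. measure_pmf.expectation (hist_pmf E P (loss_seq x) T) (cum_loss (loss_seq x))
                 - (\<Sum>s=1..T. loss_seq x s v)"
  have "(\<Sum>s=1..T. measure_pmf.expectation (coins q T) (\<lambda>x. loss_seq x s v)) = real T * mean_loss q v"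
    by (subst sum.cong[OF refl expectation_coins_loss[OF assms]]) auto
  then have "expected_cum_loss q T - real T * mean_loss q v = measure_pmf.expectation (coins q T) ?R"
    unfolding expected_cum_loss_def coins_hist_def
    by (simp add: expectation_bind_pmf_finite finite_set_coins finite_set_hist_pmf integral_diff
        integrable_measure_pmf_finite)
  also have "\<dots> \<le> measure_pmf.expectation (coins q T) (\<lambda>x. expected_regret E P (loss_seq x) T)"
  proof (rule integral_mono[OF integrable_measure_pmf_finite integrable_measure_pmf_finite])
    show "?R x \<le> expected_regret E P (loss_seq x) T" for x
      using Min_le[of "range (\<lambda>i. \<Sum>t=1..T. loss_seq x t i)"] unfolding expected_regret_def by auto
  qed (rule finite_set_coins)+
  also obtain x where "\<dots> \<le> expected_regret E P (loss_seq x) T"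
    using exists_ge_expectation_pmf[OF finite_set_coins] by blast
  finally show ?thesis by blast
qed

definition reveal_prob :: "'v history \<Rightarrow> real" where
  "reveal_prob h = measure_pmf.prob (P h) (N_in E a)"

definition reveals :: "real \<Rightarrow> nat \<Rightarrow> real" where
  "reveals q t = (\<Sum>s<t. measure_pmf.expectation (hist q s) reveal_prob)"

definition plays_a :: "real \<Rightarrow> nat \<Rightarrow> real" where
  "plays_a q t = (\<Sum>s<t. measure_pmf.expectation (hist q s) (\<lambda>h. pmf (P h) a))"

lemma extend_unrevealing:
  assumes "i \<notin> N_in E a"
  shows "extend h i y = extend h i y'"
  using assms by (auto simp: extend_def feedback_def N_out_def N_in_def loss_def fun_eq_iff)

lemma bhattacharyya_next_hist_ge:
  assumes B: "finite B" "\<And>i y. extend h i y \<in> B"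
  shows "1 - (1 - bhattacharyya UNIV (bernoulli_pmf q1) (bernoulli_pmf q2)) * reveal_prob h
           \<le> bhattacharyya B (next_hist q1 h) (next_hist q2 h)"
proof -
  let ?\<beta> = "bhattacharyya UNIV (bernoulli_pmf q1) (bernoulli_pmf q2)"
  let ?c = "\<lambda>i. if i \<in> N_in E a then ?\<beta> else 1"
  let ?round = "\<lambda>i. bhattacharyya B (map_pmf (extend h i) (bernoulli_pmf q1))
                                     (map_pmf (extend h i) (bernoulli_pmf q2))"
  have round: "?c i \<le> ?round i" for i
  proof (cases "i \<in> N_in E a")
    case True
    with B show ?thesis by (simp, intro bhattacharyya_map_ge) auto
  next
    case False
    then have "map_pmf (extend h i) p = return_pmf (extend h i True)" for p
      using map_pmf_cong[of p p "extend h i" "\<lambda>_. extend h i True"] extend_unrevealing by simp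
    with False B show ?thesis by (simp add: bhattacharyya_return_self)
  qed
  have "1 - (1 - ?\<beta>) * reveal_prob h
      = (\<Sum>i\<in>UNIV. pmf (P h) i) - (1 - ?\<beta>) * (\<Sum>i\<in>UNIV. if i \<in> N_in E a then pmf (P h) i else 0)"
    by (simp add: sum_pmf_eq_1 reveal_prob_def measure_measure_pmf_finite sum.inter_restrict[symmetric])
  also have "\<dots> = (\<Sum>i\<in>UNIV. pmf (P h) i - (1 - ?\<beta>) * (if i \<in> N_in E a then pmf (P h) i else 0))"
    by (simp add: sum_subtractf sum_distrib_left)
  also have "\<dots> = (\<Sum>i\<in>UNIV. pmf (P h) i * ?c i)"
    by (intro sum.cong) (auto simp: algebra_simps)
  also have "\<dots> \<le> (\<Sum>i\<in>UNIV. sqrt (pmf (P h) i * pmf (P h) i) * ?round i)"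
  proof (rule sum_mono)
    fix i
    have sq: "sqrt (pmf (P h) i * pmf (P h) i) = pmf (P h) i" by simp
    show "pmf (P h) i * ?c i \<le> sqrt (pmf (P h) i * pmf (P h) i) * ?round i"
      unfolding sq using round[of i] by (rule mult_left_mono) simp
  qed
  also have "\<dots> \<le> bhattacharyya B (next_hist q1 h) (next_hist q2 h)"
    unfolding next_hist_def using B by (intro bhattacharyya_bind_ge) auto
  finally show ?thesis .
qed

definition hist_bhattacharyya :: "real \<Rightarrow> real \<Rightarrow> nat \<Rightarrow> real" where
  "hist_bhattacharyya q1 q2 t =
     bhattacharyya (set_pmf (hist q1 t) \<union> set_pmf (hist q2 t)) (hist q1 t) (hist q2 t)"

lemma hist_bhattacharyya_Suc_ge:
  "hist_bhattacharyya q1 q2 t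
     - (1 - bhattacharyya UNIV (bernoulli_pmf q1) (bernoulli_pmf q2)) / 2
         * (measure_pmf.expectation (hist q1 t) reveal_prob + measure_pmf.expectation (hist q2 t) reveal_prob)
   \<le> hist_bhattacharyya q1 q2 (Suc t)"
proof -
  let ?\<beta> = "bhattacharyya UNIV (bernoulli_pmf q1) (bernoulli_pmf q2)"
  let ?A = "set_pmf (hist q1 t) \<union> set_pmf (hist q2 t)"
  let ?w = "\<lambda>h. sqrt (pmf (hist q1 t) h * pmf (hist q2 t) h)"
  define B where "B = (\<lambda>(h, i, y). extend h i y) ` (?A \<times> UNIV)"
  have A: "finite ?A" by (simp add: finite_set_hist)
  have B: "finite B" using A by (simp add: B_def)
  have extend_B: "h \<in> ?A \<Longrightarrow> extend h i y \<in> B" for h i y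
    unfolding B_def by (rule image_eqI[where x = "(h, i, y)"]) auto
  have next_B: "h \<in> ?A \<Longrightarrow> set_pmf (next_hist q h) \<subseteq> B" for h q
    unfolding next_hist_def by (auto simp: extend_B)
  have \<beta>: "0 \<le> 1 - ?\<beta>" using bhattacharyya_le_1[of "UNIV :: bool set"] by simp
  have "(\<Sum>h\<in>?A. ?w h * reveal_prob h)
      \<le> (measure_pmf.expectation (hist q1 t) reveal_prob + measure_pmf.expectation (hist q2 t) reveal_prob) / 2"
    using A by (rule sum_sqrt_pmf_mult_le_mean_expectation) (auto simp: reveal_prob_def)
  from mult_left_mono[OF this \<beta>]
  have "hist_bhattacharyya q1 q2 t - (1 - ?\<beta>) / 2
         * (measure_pmf.expectation (hist q1 t) reveal_prob + measure_pmf.expectation (hist q2 t) reveal_prob)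
      \<le> hist_bhattacharyya q1 q2 t - (1 - ?\<beta>) * (\<Sum>h\<in>?A. ?w h * reveal_prob h)"
    by simp
  also have "\<dots> = (\<Sum>h\<in>?A. ?w h * (1 - (1 - ?\<beta>) * reveal_prob h))"
    unfolding hist_bhattacharyya_def bhattacharyya_def[of ?A]
    by (simp only: sum_distrib_left flip: sum_subtractf, intro sum.cong refl) (simp add: algebra_simps)
  also have "\<dots> \<le> (\<Sum>h\<in>?A. ?w h * bhattacharyya B (next_hist q1 h) (next_hist q2 h))"
    by (intro sum_mono mult_left_mono bhattacharyya_next_hist_ge B extend_B) auto
  also have "\<dots> \<le> bhattacharyya B (hist q1 (Suc t)) (hist q2 (Suc t))"
    using A B next_B by (simp, intro bhattacharyya_bind_ge) auto
  also have "\<dots> = hist_bhattacharyya q1 q2 (Suc t)"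
    unfolding hist_bhattacharyya_def
  proof (rule bhattacharyya_support_cong[OF B])
    show "finite (set_pmf (hist q1 (Suc t)) \<union> set_pmf (hist q2 (Suc t)))"
      by (simp only: finite_Un finite_set_hist)
    show "set_pmf (hist q1 (Suc t)) \<subseteq> B" using next_B by auto
  qed auto
  finally show ?thesis .
qed

lemma hist_bhattacharyya_ge:
  "1 - (1 - bhattacharyya UNIV (bernoulli_pmf q1) (bernoulli_pmf q2)) / 2 * (reveals q1 t + reveals q2 t)
     \<le> hist_bhattacharyya q1 q2 t"
proof (induction t)
  case 0
  show ?case by (simp add: hist_bhattacharyya_def bhattacharyya_def reveals_def)
next
  case (Suc t)
  then show ?case
    using hist_bhattacharyya_Suc_ge[of q1 q2 t] by (simp add: reveals_def algebra_simps)
qed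

lemma reveals_mono: "s \<le> t \<Longrightarrow> reveals q s \<le> reveals q t"
  unfolding reveals_def by (intro sum_mono2) (auto simp: reveal_prob_def)

lemma plays_a_diff_le:
  fixes e :: real
  defines "q1 \<equiv> 1/2 - e" and "q2 \<equiv> 1/2 + e"
  assumes e: "0 \<le> e" "e \<le> 1/2"
  shows "\<bar>plays_a q1 T - plays_a q2 T\<bar> \<le> real T * (2 * e * sqrt (reveals q1 T + reveals q2 T))"
proof -
  let ?R = "reveals q1 T + reveals q2 T"
  let ?pa = "\<lambda>h. pmf (P h) a"
  have round: "\<bar>measure_pmf.expectation (hist q1 s) ?pa - measure_pmf.expectation (hist q2 s) ?pa\<bar>
                 \<le> 2 * e * sqrt ?R" if "s < T" for s
  proof -
    let ?\<beta> = "bhattacharyya UNIV (bernoulli_pmf q1) (bernoulli_pmf q2)"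
    have "0 \<le> 1 - ?\<beta>" using bhattacharyya_le_1[of "UNIV :: bool set"] by simp
    moreover have "1 - ?\<beta> \<le> (2 * e)\<^sup>2"
      using bhattacharyya_bernoulli_ge[OF e] by (simp add: q1_def q2_def power_mult_distrib)
    moreover have "0 \<le> reveals q1 s + reveals q2 s"
      using reveals_mono[of 0 s q1] reveals_mono[of 0 s q2] by (simp add: reveals_def)
    moreover have "reveals q1 s + reveals q2 s \<le> ?R"
      using reveals_mono[of s T q1] reveals_mono[of s T q2] that by simp
    ultimately have "(1 - ?\<beta>) * (reveals q1 s + reveals q2 s) \<le> (2 * e)\<^sup>2 * ?R"
      by (intro mult_mono) auto
    then have gap: "2 - 2 * hist_bhattacharyya q1 q2 s \<le> (2 * e)\<^sup>2 * ?R"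
      using hist_bhattacharyya_ge[of q1 q2 s] by simp
    have "\<bar>measure_pmf.expectation (hist q1 s) ?pa - measure_pmf.expectation (hist q2 s) ?pa\<bar>
        \<le> sqrt (2 - 2 * hist_bhattacharyya q1 q2 s)"
      unfolding hist_bhattacharyya_def
      by (rule abs_expectation_diff_le_bhattacharyya) (auto simp: finite_set_hist pmf_le_1)
    also have "\<dots> \<le> sqrt ((2 * e)\<^sup>2 * ?R)" using gap by (rule real_sqrt_le_mono)
    also have "\<dots> = 2 * e * sqrt ?R" using e by (simp add: real_sqrt_mult)
    finally show ?thesis .
  qed
  have "\<bar>plays_a q1 T - plays_a q2 T\<bar>
      \<le> (\<Sum>s<T. \<bar>measure_pmf.expectation (hist q1 s) ?pa - measure_pmf.expectation (hist q2 s) ?pa\<bar>)"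
    unfolding plays_a_def by (simp add: sum_abs flip: sum_subtractf)
  also have "\<dots> \<le> real T * (2 * e * sqrt ?R)"
    using sum_bounded_above[of "{..<T}", OF round] by simp
  finally show ?thesis .
qed

lemma mean_round_loss_ge:
  assumes "\<And>i. \<alpha> + \<beta> * indicator {a} i + \<gamma> * indicator (N_in E a) i \<le> mean_loss q i - c"
  shows "\<alpha> + \<beta> * pmf (P h) a + \<gamma> * reveal_prob h \<le> mean_round_loss q h - c"
proof -
  have "\<alpha> + \<beta> * pmf (P h) a + \<gamma> * reveal_prob h
      = measure_pmf.expectation (P h) (\<lambda>i. \<alpha> + \<beta> * indicator {a} i + \<gamma> * indicator (N_in E a) i)"
    by (simp add: reveal_prob_def measure_pmf_single integral_add integrable_measure_pmf_finite)
  also have "\<dots> \<le> measure_pmf.expectation (P h) (\<lambda>i. mean_loss q i - c)"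
    using assms by (intro integral_mono integrable_measure_pmf_finite) auto
  also have "\<dots> = mean_round_loss q h - c"
    by (simp add: mean_round_loss_def integral_diff integrable_measure_pmf_finite)
  finally show ?thesis .
qed

lemma expected_cum_loss_ge:
  assumes "0 \<le> q" "q \<le> 1"
    and gap: "\<And>i. \<alpha> + \<beta> * indicator {a} i + \<gamma> * indicator (N_in E a) i \<le> mean_loss q i - c"
  shows "real T * \<alpha> + \<beta> * plays_a q T + \<gamma> * reveals q T \<le> expected_cum_loss q T - real T * c"
proof -
  have "real T * \<alpha> + \<beta> * plays_a q T + \<gamma> * reveals q T
      = (\<Sum>s<T. measure_pmf.expectation (hist q s) (\<lambda>h. \<alpha> + \<beta> * pmf (P h) a + \<gamma> * reveal_prob h))"
    by (simp add: plays_a_def reveals_def sum.distrib sum_distrib_left integral_add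
        integrable_measure_pmf_finite finite_set_hist)
  also have "\<dots> \<le> (\<Sum>s<T. measure_pmf.expectation (hist q s) (\<lambda>h. mean_round_loss q h - c))"
    using mean_round_loss_ge[OF gap]
    by (intro sum_mono integral_mono integrable_measure_pmf_finite finite_set_hist)
  also have "\<dots> = expected_cum_loss q T - real T * c"
    by (simp add: expected_cum_loss_eq_sum[OF assms(1,2)] sum_subtractf integral_diff
        integrable_measure_pmf_finite finite_set_hist)
  finally show ?thesis .
qed

lemma exists_coins_regret_ge_powr:
  "\<exists>x. 1/8 * real T powr (2/3) \<le> expected_regret E P (loss_seq x) T"
proof -
  define e where "e = 1 / (2 * real T powr (1/3))"
  note e = cube_root_gap[of T, folded e_def]
  define q1 where "q1 = 1/2 - e"
  define q2 where "q2 = 1/2 + e"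
  have q: "0 \<le> q1" "q1 \<le> 1" "0 \<le> q2" "q2 \<le> 1" using e by (auto simp: q1_def q2_def)
  have unrevealing: "a \<notin> N_in E a" "b \<notin> N_in E a"
    using a_a_unobserved b_a_unobserved by (auto simp: N_in_def)
  have low: "real T * e + (- e) * plays_a q1 T + 1/2 * reveals q1 T
               \<le> expected_cum_loss q1 T - real T * mean_loss q1 a"
    by (rule expected_cum_loss_ge) (use q unrevealing a_ne_b in \<open>auto simp: mean_loss_def q1_def\<close>)
  have high: "real T * 0 + e * plays_a q2 T + 1/2 * reveals q2 T
               \<le> expected_cum_loss q2 T - real T * mean_loss q2 b"
    by (rule expected_cum_loss_ge) (use q unrevealing a_ne_b in \<open>auto simp: mean_loss_def q2_def\<close>)
  have "e * (plays_a q1 T - plays_a q2 T)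
          \<le> (reveals q1 T + reveals q2 T) / 2 + 2 * e ^ 4 * (real T)\<^sup>2"
    using reveals_mono[of 0 T] e(1,2) plays_a_diff_le[OF e(1,2), of T, folded q1_def q2_def]
    by (intro gap_tradeoff) (auto simp: reveals_def)
  then have "3/8 * real T powr (2/3) \<le> (expected_cum_loss q1 T - real T * mean_loss q1 a)
                                       + (expected_cum_loss q2 T - real T * mean_loss q2 b)"
    using low high e(3) unfolding right_diff_distrib mult_minus_left mult.commute[of "real T" e]
    by argo
  then have "1/8 * real T powr (2/3) \<le> expected_cum_loss q1 T - real T * mean_loss q1 a
           \<or> 1/8 * real T powr (2/3) \<le> expected_cum_loss q2 T - real T * mean_loss q2 b"
    using powr_ge_zero[of "real T" "2/3"] by argo
  then show ?thesis
    using exists_coins_regret_ge[OF q(1,2), of T a] exists_coins_regret_ge[OF q(3,4), of T b]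
    by (meson order_trans)
qed

end

theorem theorem11:
  fixes E :: "('v::finite \<times> 'v) set"
  assumes "weakly_observable E"
    and "CARD('v) \<ge> 2"
  shows "\<forall>(P :: 'v player) (T :: nat). \<exists>l :: nat \<Rightarrow> 'v \<Rightarrow> real.
           (\<forall>t\<in>{1..T}. \<forall>i. 0 \<le> l t i \<and> l t i \<le> 1) \<and>
           expected_regret E P l T \<ge> (1/8) * real T powr (2/3)"
proof (intro allI)
  fix P :: "'v player" and T :: nat
  from assms(1) obtain a where "\<not> strongly_observable E a"
    unfolding weakly_observable_def by blast
  then obtain b where "b \<noteq> a" "(a, a) \<notin> E" "(b, a) \<notin> E"
    unfolding strongly_observable_def N_in_def by auto
  then interpret hard_instance E P a b by unfold_locales auto
  obtain x where "1/8 * real T powr (2/3) \<le> expected_regret E P (loss_seq x) T"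
    using exists_coins_regret_ge_powr by blast
  moreover have "\<forall>t\<in>{1..T}. \<forall>i. 0 \<le> loss_seq x t i \<and> loss_seq x t i \<le> 1"
    by (simp add: loss_seq_def loss_def)
  ultimately show "\<exists>l. (\<forall>t\<in>{1..T}. \<forall>i. 0 \<le> l t i \<and> l t i \<le> 1) \<and>
                      expected_regret E P l T \<ge> 1/8 * real T powr (2/3)"
    by blast
qed

end
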